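(* For $a>0$ and $m>0$, $$\int_{0}^{1}\frac{\left(a^2-\log^2x\right)\tanh^{-1}(x^m)}{x\left(a^2+\log^2x\right)^2}\,dx=\frac14\left(-m\,\psi\!\left(\frac{am}{2\pi}+1\right)+m\,\psi\!\left(\frac{am+\pi}{2\pi}\right)+\frac{\pi}{a}\right).$$
   Context: $\psi=\Gamma'/\Gamma$ is the digamma function. *)

theory Defs
  imports "HOL-Analysis.Analysis"
begin

end

theory Submission
  imports Defs "HOL-Real_Asymp.Real_Asymp"
begin

(* Substituting artanh (x^m) = \<Sum>\<^sub>j x^((2j+1)m) / (2j+1) and
   (a^2 - t^2) / (a^2 + t^2)^2 = \<integral>\<^sub>0^\<infinity> s e^(-as) cos (s t) ds, the j-th term becomes,
   after swapping the two integrals, \<integral>\<^sub>0^\<infinity> s e^(-as) m / ((2j+1)^2 m^2 + s^2) ds.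
   The partial fraction expansion of tanh (a consequence of the reflection formula for \<psi>)
   sums these terms to (\<pi>/4) \<integral>\<^sub>0^\<infinity> e^(-as) tanh (\<pi>s/(2m)) ds. Expanding tanh as a
   geometric series in e^(-\<pi>s/m) leaves a series \<Sum>\<^sub>n (1/(n+x) - 1/(n+y)), which is \<psi>(y) - \<psi>(x). *)

subsection \<open>Laplace and Mellin integrals\<close>

lemma tendsto_mult_bounded_zero:
  fixes h u :: "'a \<Rightarrow> real"
  assumes "(h \<longlongrightarrow> 0) F" "\<And>x. \<bar>u x\<bar> \<le> 1"
  shows "((\<lambda>x. u x * h x) \<longlongrightarrow> 0) F"
proof (rule Lim_null_comparison)
  show "\<forall>\<^sub>F x in F. norm (u x * h x) \<le> \<bar>h x\<bar>"
    using assms(2) by (auto simp: abs_mult intro!: always_eventually mult_left_le_one_le)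
  show "((\<lambda>x. \<bar>h x\<bar>) \<longlongrightarrow> 0) F" using tendsto_rabs_zero[OF assms(1)] .
qed

lemma set_integral_exp_neg_Ioi:
  fixes b :: real assumes b: "b > 0"
  shows "set_integrable lborel {0<..} (\<lambda>s. exp (- b * s))"
    and "(LINT s:{0<..}|lborel. exp (- b * s)) = 1 / b"
proof -
  let ?F = "\<lambda>s. - exp (- b * s) / b"
  have lim: "(?F \<longlongrightarrow> 0) at_top"
    using b by real_asymp
  have *: "set_integrable lborel (einterval 0 \<infinity>) (\<lambda>s. exp (- b * s))"
       "(LBINT s=0..\<infinity>. exp (- b * s)) = 0 - (- 1 / b)"
    by (rule interval_integral_FTC_nonneg[where F="?F"];
        use b lim in \<open>auto intro!: derivative_eq_intros tendsto_eq_intros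
                        simp: ereal_tendsto_simps zero_ereal_def\<close>)+
  show "set_integrable lborel {0<..} (\<lambda>s. exp (- b * s))"
    using *(1) by (simp add: zero_ereal_def)
  show "(LINT s:{0<..}|lborel. exp (- b * s)) = 1 / b"
    using *(2) by (simp add: zero_ereal_def interval_integral_to_infinity_eq)
qed

lemma set_integral_mult_exp_neg_Ioi:
  fixes a :: real assumes a: "a > 0"
  shows "set_integrable lborel {0<..} (\<lambda>s. s * exp (- a * s))"
    and "(LINT s:{0<..}|lborel. s * exp (- a * s)) = 1 / a\<^sup>2"
proof -
  let ?F = "\<lambda>s. - (s / a + 1 / a\<^sup>2) * exp (- a * s)"
  have lim: "(?F \<longlongrightarrow> 0) at_top"
    using a by real_asymp
  have deriv: "(?F has_real_derivative s * exp (- a * s)) (at s)" for s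
    using a by (auto intro!: derivative_eq_intros simp: field_simps power2_eq_square)
  have *: "set_integrable lborel (einterval 0 \<infinity>) (\<lambda>s. s * exp (- a * s))"
       "(LBINT s=0..\<infinity>. s * exp (- a * s)) = 0 - (- 1 / a\<^sup>2)"
    by (rule interval_integral_FTC_nonneg[where F="?F"];
        use a lim deriv in \<open>auto intro!: tendsto_eq_intros simp: ereal_tendsto_simps zero_ereal_def\<close>)+
  show "set_integrable lborel {0<..} (\<lambda>s. s * exp (- a * s))"
    using *(1) by (simp add: zero_ereal_def)
  show "(LINT s:{0<..}|lborel. s * exp (- a * s)) = 1 / a\<^sup>2"
    using *(2) by (simp add: zero_ereal_def interval_integral_to_infinity_eq)
qed

lemma set_integral_laplace_cos_Ioi:
  fixes a t :: real assumes a: "a > 0"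
  shows "set_integrable lborel {0<..} (\<lambda>s. s * exp (- a * s) * cos (s * t))"
    and "(LINT s:{0<..}|lborel. s * exp (- a * s) * cos (s * t)) = (a\<^sup>2 - t\<^sup>2) / (a\<^sup>2 + t\<^sup>2)\<^sup>2"
proof -
  define D where "D = a\<^sup>2 + t\<^sup>2"
  have D: "D > 0" using a by (simp add: D_def add_pos_nonneg)
  show int: "set_integrable lborel {0<..} (\<lambda>s. s * exp (- a * s) * cos (s * t))"
    by (rule set_integrable_bound[OF set_integral_mult_exp_neg_Ioi(1)[OF a]])
       (auto simp: set_borel_measurable_def abs_mult intro!: mult_left_le)
  \<comment> \<open>Undetermined coefficients for the antiderivative
      sin (s t) e^(-as) (P s + Q) - cos (s t) e^(-as) (R s + T).\<close>
  define P where "P = t / D"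
  define Q where "Q = 2 * a * t / D\<^sup>2"
  define R where "R = a / D"
  define T where "T = (a\<^sup>2 - t\<^sup>2) / D\<^sup>2"
  have "D \<noteq> 0" using D by simp
  then have coeffs: "-a*P + t*R = 0" "-a*Q + P + t*T = 0" "a*R + t*P = 1" "a*T + t*Q - R = 0"
    unfolding P_def Q_def R_def T_def
    by (simp_all add: field_simps power2_eq_square) (simp_all add: D_def power2_eq_square algebra_simps)
  let ?F = "\<lambda>s. sin (s * t) * (exp (- a * s) * (s * P + Q))
                 - cos (s * t) * (exp (- a * s) * (s * R + T))"
  have lim: "(?F \<longlongrightarrow> 0) at_top"
  proof -
    have "((\<lambda>s. exp (- a * s) * (s * P + Q)) \<longlongrightarrow> 0) at_top"
         "((\<lambda>s. exp (- a * s) * (s * R + T)) \<longlongrightarrow> 0) at_top"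
      using a by real_asymp+
    from tendsto_diff[OF tendsto_mult_bounded_zero[OF this(1)] tendsto_mult_bounded_zero[OF this(2)]]
    show ?thesis by simp
  qed
  have deriv: "(?F has_vector_derivative s * exp (- a * s) * cos (s * t)) (at s)" for s
  proof -
    have "(?F has_real_derivative
       exp (- a * s) * (sin (s * t) * (s * (-a*P + t*R) + (-a*Q + P + t*T))
          + cos (s * t) * (s * (a*R + t*P) + (a*T + t*Q - R)))) (at s)"
      by (rule derivative_eq_intros refl | simp)+ algebra
    then show ?thesis
      unfolding has_real_derivative_iff_has_vector_derivative[symmetric] coeffs
      by (simp add: mult_ac)
  qed
  have *: "(LBINT s=0..\<infinity>. s * exp (- a * s) * cos (s * t)) = 0 - ?F 0"
    by (rule interval_integral_FTC_integrable[where F="?F"];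
        use a lim deriv int in \<open>auto intro!: tendsto_eq_intros simp: ereal_tendsto_simps zero_ereal_def\<close>)
  show "(LINT s:{0<..}|lborel. s * exp (- a * s) * cos (s * t)) = (a\<^sup>2 - t\<^sup>2) / (a\<^sup>2 + t\<^sup>2)\<^sup>2"
    using * D by (simp add: zero_ereal_def interval_integral_to_infinity_eq T_def D_def)
qed

lemma set_integral_powr_Ioo:
  fixes c :: real assumes c: "c > 0"
  shows "set_integrable lborel {0<..<1} (\<lambda>x. x powr (c - 1))"
    and "(LINT x:{0<..<1}|lborel. x powr (c - 1)) = 1 / c"
proof -
  let ?F = "\<lambda>x. x powr c / c"
  have lim0: "(?F \<longlongrightarrow> 0) (at_right 0)"
    using c by real_asymp
  have lim1: "(?F \<longlongrightarrow> 1 / c) (at_left 1)"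
    using c by (auto intro!: tendsto_eq_intros)
  have deriv: "(?F has_real_derivative x powr (c - 1)) (at x)" if "0 < x" for x
    using c that by (auto intro!: derivative_eq_intros simp: field_simps powr_diff)
  have *: "set_integrable lborel (einterval 0 1) (\<lambda>x. x powr (c - 1))"
       "(LBINT x=0..1. x powr (c - 1)) = 1 / c - 0"
    by (rule interval_integral_FTC_nonneg[where F="?F"];
        use c lim0 lim1 deriv in \<open>auto intro!: continuous_intros
                                    simp: ereal_tendsto_simps zero_ereal_def one_ereal_def\<close>)+
  show "set_integrable lborel {0<..<1} (\<lambda>x. x powr (c - 1))"
    using *(1) by (simp add: zero_ereal_def one_ereal_def)
  show "(LINT x:{0<..<1}|lborel. x powr (c - 1)) = 1 / c"
    using *(2) by (simp add: zero_ereal_def one_ereal_def interval_integral_Ioo)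
qed

lemma set_integral_powr_cos_ln_Ioo:
  fixes c s :: real assumes c: "c > 0"
  shows "set_integrable lborel {0<..<1} (\<lambda>x. x powr (c - 1) * cos (s * ln x))"
    and "(LINT x:{0<..<1}|lborel. x powr (c - 1) * cos (s * ln x)) = c / (c\<^sup>2 + s\<^sup>2)"
proof -
  define D where "D = c\<^sup>2 + s\<^sup>2"
  have D: "D > 0" using c by (simp add: D_def add_pos_nonneg)
  show int: "set_integrable lborel {0<..<1} (\<lambda>x. x powr (c - 1) * cos (s * ln x))"
    by (rule set_integrable_bound[OF set_integral_powr_Ioo(1)[OF c]])
       (auto simp: set_borel_measurable_def abs_mult intro!: mult_left_le)
  let ?F = "\<lambda>x. cos (s * ln x) * (x powr c * (c / D)) + sin (s * ln x) * (x powr c * (s / D))"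
  have lim0: "(?F \<longlongrightarrow> 0) (at_right 0)"
  proof -
    have "((\<lambda>x. x powr c * (c / D)) \<longlongrightarrow> 0) (at_right 0)"
         "((\<lambda>x. x powr c * (s / D)) \<longlongrightarrow> 0) (at_right 0)"
      using c by real_asymp+
    from tendsto_add[OF tendsto_mult_bounded_zero[OF this(1)] tendsto_mult_bounded_zero[OF this(2)]]
    show ?thesis by simp
  qed
  have lim1: "(?F \<longlongrightarrow> c / D) (at_left 1)"
    using c D by (auto intro!: tendsto_eq_intros)
  have deriv: "(?F has_vector_derivative x powr (c - 1) * cos (s * ln x)) (at x)" if x: "0 < x" for x
  proof -
    have "(?F has_real_derivative
        (- sin (s * ln x) * (s / x)) * (x powr c * (c / D)) + (c * x powr (c - 1) * (c / D)) * cos (s * ln x)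
      + ((cos (s * ln x) * (s / x)) * (x powr c * (s / D)) + (c * x powr (c - 1) * (s / D)) * sin (s * ln x))) (at x)"
      using x by (intro DERIV_add DERIV_mult DERIV_cmult_right has_real_derivative_powr)
                 (auto intro!: derivative_eq_intros)
    moreover have "(- sin (s * ln x) * (s / x)) * (x powr c * (c / D)) + (c * x powr (c - 1) * (c / D)) * cos (s * ln x)
      + ((cos (s * ln x) * (s / x)) * (x powr c * (s / D)) + (c * x powr (c - 1) * (s / D)) * sin (s * ln x))
      = x powr (c - 1) * cos (s * ln x)"
    proof -
      have "x powr c = x * x powr (c - 1)"
        using x by (simp add: powr_mult_base)
      then show ?thesis
        using x D by (simp add: field_simps) (simp add: D_def power2_eq_square algebra_simps)
    qed
    ultimately show ?thesis
      unfolding has_real_derivative_iff_has_vector_derivative[symmetric] by simp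
  qed
  have *: "(LBINT x=0..1. x powr (c - 1) * cos (s * ln x)) = c / D - 0"
    by (rule interval_integral_FTC_integrable[where F="?F"];
        use c lim0 lim1 deriv int in \<open>auto intro!: continuous_intros
                                        simp: ereal_tendsto_simps zero_ereal_def one_ereal_def\<close>)
  show "(LINT x:{0<..<1}|lborel. x powr (c - 1) * cos (s * ln x)) = c / (c\<^sup>2 + s\<^sup>2)"
    using * by (simp add: zero_ereal_def one_ereal_def interval_integral_Ioo D_def)
qed

lemma abs_laplace_cos_kernel_le:
  fixes a t :: real assumes a: "a > 0"
  shows "\<bar>(a\<^sup>2 - t\<^sup>2) / (a\<^sup>2 + t\<^sup>2)\<^sup>2\<bar> \<le> 1 / a\<^sup>2"
proof -
  have pos: "a\<^sup>2 > 0" using a by simp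
  have "\<bar>a\<^sup>2 - t\<^sup>2\<bar> \<le> a\<^sup>2 + t\<^sup>2"
    using zero_le_power2[of a] zero_le_power2[of t] by linarith
  then have "\<bar>(a\<^sup>2 - t\<^sup>2) / (a\<^sup>2 + t\<^sup>2)\<^sup>2\<bar> \<le> (a\<^sup>2 + t\<^sup>2) / (a\<^sup>2 + t\<^sup>2)\<^sup>2"
    using pos by (simp add: abs_div divide_right_mono add_pos_nonneg)
  also have "\<dots> = 1 / (a\<^sup>2 + t\<^sup>2)"
    using pos by (simp add: power2_eq_square add_pos_nonneg)
  also have "\<dots> \<le> 1 / a\<^sup>2"
    using pos by (simp add: frac_le)
  finally show ?thesis .
qed

lemma set_integrable_powr_laplace_cos_kernel:
  fixes a c :: real assumes a: "a > 0" and c: "c > 0"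
  shows "set_integrable lborel {0<..<1} (\<lambda>x. x powr (c - 1) * ((a\<^sup>2 - (ln x)\<^sup>2) / (a\<^sup>2 + (ln x)\<^sup>2)\<^sup>2))"
    and "(LINT x:{0<..<1}|lborel. \<bar>x powr (c - 1) * ((a\<^sup>2 - (ln x)\<^sup>2) / (a\<^sup>2 + (ln x)\<^sup>2)\<^sup>2)\<bar>) \<le> 1 / (a\<^sup>2 * c)"
proof -
  let ?K = "\<lambda>x::real. (a\<^sup>2 - (ln x)\<^sup>2) / (a\<^sup>2 + (ln x)\<^sup>2)\<^sup>2"
  have le: "\<bar>x powr (c - 1) * ?K x\<bar> \<le> x powr (c - 1) * (1 / a\<^sup>2)" for x
    using mult_left_mono[OF abs_laplace_cos_kernel_le[OF a, of "ln x"], of "x powr (c - 1)"]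
    by (simp add: abs_mult)
  have bound_int: "set_integrable lborel {0<..<1} (\<lambda>x. x powr (c - 1) * (1 / a\<^sup>2))"
    using set_integral_powr_Ioo(1)[OF c] by (simp add: mult.commute)
  show int: "set_integrable lborel {0<..<1} (\<lambda>x. x powr (c - 1) * ?K x)"
  proof (rule set_integrable_bound[OF bound_int])
    show "set_borel_measurable lborel {0<..<1} (\<lambda>x. x powr (c - 1) * ?K x)"
      by (simp add: set_borel_measurable_def)
    show "AE x in lborel. x \<in> {0<..<1} \<longrightarrow> norm (x powr (c - 1) * ?K x) \<le> norm (x powr (c - 1) * (1 / a\<^sup>2))"
      using le by (intro AE_I2 impI) (simp only: real_norm_def order_trans[OF _ abs_ge_self])
  qed
  have "(LINT x:{0<..<1}|lborel. \<bar>x powr (c - 1) * ?K x\<bar>) \<le> (LINT x:{0<..<1}|lborel. x powr (c - 1) * (1 / a\<^sup>2))"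
    by (rule set_integral_mono[OF set_integrable_abs[OF int] bound_int le])
  also have "\<dots> = 1 / (a\<^sup>2 * c)"
    using set_integral_powr_Ioo(2)[OF c] by (simp add: mult.commute)
  finally show "(LINT x:{0<..<1}|lborel. \<bar>x powr (c - 1) * ?K x\<bar>) \<le> 1 / (a\<^sup>2 * c)" .
qed

lemma integrable_lborel_pair_product:
  fixes f g :: "real \<Rightarrow> real"
  assumes f: "integrable lborel f" and g: "integrable lborel g"
  shows "integrable (lborel \<Otimes>\<^sub>M lborel) (\<lambda>(x, y). f x * g y)"
proof (rule lborel_pair.Fubini_integrable)
  show "(\<lambda>(x, y). f x * g y) \<in> borel_measurable (lborel \<Otimes>\<^sub>M lborel)"
    using f g by measurable
  have "(\<integral>y. norm (f x * g y) \<partial>lborel) = \<bar>f x\<bar> * (\<integral>y. \<bar>g y\<bar> \<partial>lborel)" for x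
    by (simp add: abs_mult)
  then show "integrable lborel (\<lambda>x. \<integral>y. norm (case_prod (\<lambda>x y. f x * g y) (x, y)) \<partial>lborel)"
    using integrable_abs[OF f] by simp
  show "AE x in lborel. integrable lborel (\<lambda>y. case_prod (\<lambda>x y. f x * g y) (x, y))"
    using g by simp
qed

text \<open>Both sides equal the double integral of
  \<open>s e^(-as) cos (s ln x) x^(c-1)\<close> over \<open>(0,\<infinity>) \<times> (0,1)\<close>, which converges absolutely.\<close>

lemma mellin_laplace_cos_kernel:
  fixes a c :: real assumes a: "a > 0" and c: "c > 0"
  shows "(LINT x:{0<..<1}|lborel. x powr (c - 1) * ((a\<^sup>2 - (ln x)\<^sup>2) / (a\<^sup>2 + (ln x)\<^sup>2)\<^sup>2))
       = (LINT s:{0<..}|lborel. s * exp (- a * s) * (c / (c\<^sup>2 + s\<^sup>2)))"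
proof -
  define L where "L s = indicator {0<..} s * (s * exp (- a * s))" for s :: real
  define M where "M x = indicator {0<..<1} x * x powr (c - 1)" for x :: real
  define g where "g s x = L s * M x * cos (s * ln x)" for s x :: real
  have [measurable]: "case_prod g \<in> borel_measurable (lborel \<Otimes>\<^sub>M lborel)"
    unfolding g_def L_def M_def by measurable
  have L_int: "integrable lborel L" and M_int: "integrable lborel M"
    using set_integral_mult_exp_neg_Ioi(1)[OF a] set_integral_powr_Ioo(1)[OF c]
    unfolding L_def M_def by (simp_all add: set_integrable_def)
  have LM_int: "integrable (lborel \<Otimes>\<^sub>M lborel) (\<lambda>(s, x). L s * M x)"
    by (rule integrable_lborel_pair_product[OF L_int M_int])
  have g_int: "integrable (lborel \<Otimes>\<^sub>M lborel) (case_prod g)"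
    by (rule Bochner_Integration.integrable_bound[OF LM_int])
       (auto simp: g_def L_def M_def indicator_def abs_mult intro!: mult_left_le)
  have inner_x: "(\<integral>x. g s x \<partial>lborel) = L s * (c / (c\<^sup>2 + s\<^sup>2))" for s
  proof -
    have "(\<integral>x. g s x \<partial>lborel) = L s * (LINT x:{0<..<1}|lborel. x powr (c - 1) * cos (s * ln x))"
      by (simp add: g_def M_def set_lebesgue_integral_def mult_ac)
    then show ?thesis by (simp add: set_integral_powr_cos_ln_Ioo(2)[OF c])
  qed
  have inner_s: "(\<integral>s. g s x \<partial>lborel) = M x * ((a\<^sup>2 - (ln x)\<^sup>2) / (a\<^sup>2 + (ln x)\<^sup>2)\<^sup>2)" for x
  proof -
    have "(\<integral>s. g s x \<partial>lborel)
        = (\<integral>s. M x * (indicator {0<..} s * (s * exp (- a * s) * cos (s * ln x))) \<partial>lborel)"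
      by (rule Bochner_Integration.integral_cong) (simp_all add: g_def L_def mult_ac)
    also have "\<dots> = M x * (LINT s:{0<..}|lborel. s * exp (- a * s) * cos (s * ln x))"
      by (simp add: set_lebesgue_integral_def)
    finally have "(\<integral>s. g s x \<partial>lborel) = M x * (LINT s:{0<..}|lborel. s * exp (- a * s) * cos (s * ln x))" .
    then show ?thesis unfolding set_integral_laplace_cos_Ioi(2)[OF a] .
  qed
  have "(\<integral>x. (\<integral>s. g s x \<partial>lborel) \<partial>lborel) = (\<integral>s. (\<integral>x. g s x \<partial>lborel) \<partial>lborel)"
    by (rule lborel_pair.Fubini_integral[OF g_int])
  then show ?thesis
    by (simp add: inner_x inner_s L_def M_def set_lebesgue_integral_def mult_ac)
qed

lemma sums_set_integral:
  fixes f :: "nat \<Rightarrow> 'a \<Rightarrow> real"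
  assumes int: "\<And>j. set_integrable M A (f j)"
    and sums: "\<And>x. x \<in> A \<Longrightarrow> (\<lambda>j. f j x) sums g x"
    and abs_summable: "\<And>x. x \<in> A \<Longrightarrow> summable (\<lambda>j. \<bar>f j x\<bar>)"
    and integral_abs_le: "\<And>j. (LINT x:A|M. \<bar>f j x\<bar>) \<le> B j" and "summable B"
  shows "set_integrable M A g"
    and "(\<lambda>j. LINT x:A|M. f j x) sums (LINT x:A|M. g x)"
proof -
  define u where "u j x = indicator A x * f j x" for j x
  have u_int: "integrable M (u j)" for j
    using int[of j] unfolding u_def by (simp add: set_integrable_def)
  have AE_summable: "AE x in M. summable (\<lambda>j. norm (u j x))"
    using abs_summable by (intro AE_I2) (auto simp: u_def indicator_def)
  have "(\<integral>x. norm (u j x) \<partial>M) = (LINT x:A|M. \<bar>f j x\<bar>)" for j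
    by (simp add: u_def set_lebesgue_integral_def abs_mult)
  moreover have "0 \<le> (LINT x:A|M. \<bar>f j x\<bar>)" for j
    unfolding set_lebesgue_integral_def by (rule integral_nonneg_AE) simp
  ultimately have norm_summable: "summable (\<lambda>j. \<integral>x. norm (u j x) \<partial>M)"
    using integral_abs_le by (intro summable_comparison_test'[OF \<open>summable B\<close>]) simp
  have suminf_u: "(\<lambda>x. \<Sum>j. u j x) = (\<lambda>x. indicator A x * g x)"
    using sums by (auto simp: u_def indicator_def sums_iff)
  show "set_integrable M A g"
    using integrable_suminf[OF u_int AE_summable norm_summable]
    by (simp add: suminf_u set_integrable_def)
  show "(\<lambda>j. LINT x:A|M. f j x) sums (LINT x:A|M. g x)"
    using sums_integral[OF u_int AE_summable norm_summable] unfolding suminf_u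
    by (simp add: u_def set_lebesgue_integral_def)
qed

lemma summable_divide_odd_squares: "summable (\<lambda>j::nat. C / (real (2 * j + 1))\<^sup>2)"
proof (rule summable_comparison_test')
  show "summable (\<lambda>j::nat. \<bar>C\<bar> * (1 / (real j + 1)\<^sup>2))"
    using inverse_squares_sums by (intro summable_mult) (simp add: sums_iff add.commute)
  fix j :: nat
  have "(real j + 1)\<^sup>2 \<le> (real (2 * j + 1))\<^sup>2"
    by (intro power_mono) auto
  then have "\<bar>C\<bar> / (real (2 * j + 1))\<^sup>2 \<le> \<bar>C\<bar> / (real j + 1)\<^sup>2"
    by (intro divide_left_mono) (auto simp: add_pos_nonneg)
  then show "norm (C / (real (2 * j + 1))\<^sup>2) \<le> \<bar>C\<bar> * (1 / (real j + 1)\<^sup>2)"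
    by (simp add: abs_div)
qed

lemma artanh_odd_powers_sums:
  fixes y :: real assumes y: "\<bar>y\<bar> < 1"
  shows "(\<lambda>j. y ^ (2 * j + 1) / real (2 * j + 1)) sums artanh y"
proof -
  define f where "f n = (- ((- y) ^ n) / real n - - (y ^ n) / real n) / 2" for n
  have "(\<lambda>n. - ((- y) ^ n) / real n) sums ln (1 + y)"
       "(\<lambda>n. - ((- (- y)) ^ n) / real n) sums ln (1 + (- y))"
    by (rule ln_series'; use y in simp)+
  then have "f sums ((ln (1 + y) - ln (1 - y)) / 2)"
    unfolding f_def by (intro sums_divide sums_diff) simp_all
  also have "(ln (1 + y) - ln (1 - y)) / 2 = artanh y"
    using y by (auto simp: artanh_def ln_div abs_less_iff)
  finally have "(\<lambda>j. sum f {j * 2..<j * 2 + 2}) sums artanh y"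
    by (rule sums_group) simp
  moreover have "sum f {j * 2..<j * 2 + 2} = y ^ (2 * j + 1) / real (2 * j + 1)" for j
  proof -
    have "{j * 2..<j * 2 + 2} = {2 * j, 2 * j + 1}" by auto
    moreover have "(- y) ^ (2 * j + 1) = - (y ^ (2 * j + 1))"
      by (simp add: power_minus_odd)
    ultimately show ?thesis
      by (simp add: f_def del: power_Suc of_nat_Suc)
  qed
  ultimately show ?thesis by simp
qed

lemma artanh_powr_sums:
  fixes x m :: real assumes x: "0 < x" "x < 1" and m: "m > 0"
  shows "(\<lambda>j. x powr (real (2 * j + 1) * m - 1) / real (2 * j + 1)) sums (artanh (x powr m) / x)"
proof -
  have "\<bar>x powr m\<bar> < 1"
    using x m powr_less_mono2[of m x 1] by auto
  from sums_divide[OF artanh_odd_powers_sums[OF this], of x]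
  have "(\<lambda>j. (x powr m) ^ (2 * j + 1) / real (2 * j + 1) / x) sums (artanh (x powr m) / x)" .
  moreover have "(x powr m) ^ (2 * j + 1) / real (2 * j + 1) / x = x powr (real (2 * j + 1) * m - 1) / real (2 * j + 1)" for j
  proof -
    have "(x powr m) ^ (2 * j + 1) = x powr (real (2 * j + 1) * m)"
      using x by (subst powr_power) simp_all
    then show ?thesis using x by (simp add: powr_diff)
  qed
  ultimately show ?thesis by simp
qed

lemma Digamma_diff_sums:
  fixes x y :: "'a :: {real_normed_field, banach}"
  assumes "x \<noteq> 0" "y \<noteq> 0"
  shows "(\<lambda>n. inverse (x + of_nat n) - inverse (y + of_nat n)) sums (Digamma y - Digamma x)"
proof -
  have "(\<lambda>n. inverse (of_nat (Suc n)) - inverse (z + of_nat n)) sums (Digamma z + euler_mascheroni)"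
    if "z \<noteq> 0" for z :: 'a
    using summable_Digamma[OF that] by (simp add: Digamma_def summable_sums)
  from sums_diff[OF this[OF assms(2)] this[OF assms(1)]] show ?thesis
    by simp
qed

lemma Digamma_odd_even_sums:
  fixes a d :: real assumes d: "d > 0" and ad: "a + d > 0"
  shows "(\<lambda>n. 1 / (a + real (2 * n + 1) * d) - 1 / (a + real (2 * n + 2) * d))
         sums ((Digamma (a / (2 * d) + 1) - Digamma (a / (2 * d) + 1/2)) / (2 * d))"
proof -
  have "a / (2 * d) + 1/2 > 0"
    using d ad by (simp add: field_simps)
  then have "(\<lambda>n. (1 / (2 * d)) * (inverse (a / (2 * d) + 1/2 + of_nat n) - inverse (a / (2 * d) + 1 + of_nat n)))
      sums ((1 / (2 * d)) * (Digamma (a / (2 * d) + 1) - Digamma (a / (2 * d) + 1/2)))"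
    by (intro sums_mult Digamma_diff_sums) linarith+
  moreover have "(1 / (2 * d)) * (inverse (a / (2 * d) + 1/2 + of_nat n) - inverse (a / (2 * d) + 1 + of_nat n))
      = 1 / (a + real (2 * n + 1) * d) - 1 / (a + real (2 * n + 2) * d)" for n
  proof -
    have "1 * d \<le> real (2 * n + 1) * d" "1 * d \<le> real (2 * n + 2) * d"
      using d by (intro mult_right_mono; simp)+
    then have "0 < a + real (2 * n + 1) * d" "0 < a + real (2 * n + 2) * d"
      using ad by linarith+
    then show ?thesis
      using d by (simp add: field_simps)
  qed
  ultimately show ?thesis by simp
qed

lemma Digamma_reflection_cot:
  fixes z :: complex assumes z: "z \<notin> \<int>"
  shows "Digamma (1 - z) - Digamma z = of_real pi * cot (of_real pi * z)"
proof -
  have z1: "z \<notin> \<int>\<^sub>\<le>\<^sub>0" using z nonpos_Ints_subset_Ints by blast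
  have z2: "1 - z \<notin> \<int>\<^sub>\<le>\<^sub>0"
    using z nonpos_Ints_subset_Ints Ints_diff[of 1 "1 - z"] by auto
  have sin_nz: "sin (of_real pi * z) \<noteq> 0"
  proof
    assume "sin (of_real pi * z) = 0"
    then obtain n :: int where "of_real pi * z = of_real (of_int n * pi)"
      by (auto simp: sin_eq_0)
    then have "z = of_int n" by (simp add: mult.commute)
    with z show False by simp
  qed
  have reflection: "(\<lambda>w. rGamma w * rGamma (1 - w)) = (\<lambda>w::complex. sin (of_real pi * w) / of_real pi)"
    using rGamma_reflection_complex by blast
  \<comment> \<open>Differentiate the reflection formula for rGamma.\<close>
  have r1: "(rGamma has_field_derivative - rGamma z * Digamma z) (at z)"
    using has_field_derivative_rGamma_complex'[of z UNIV] z1 by simp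
  have r2: "(rGamma has_field_derivative - rGamma (1 - z) * Digamma (1 - z)) (at (1 - z))"
    using has_field_derivative_rGamma_complex'[of "1 - z" UNIV] z2 by simp
  have "((\<lambda>w. rGamma w * rGamma (1 - w)) has_field_derivative
      (- rGamma z * Digamma z) * rGamma (1 - z) + (- rGamma (1 - z) * Digamma (1 - z) * (- 1)) * rGamma z) (at z)"
    by (rule DERIV_mult[OF r1], rule DERIV_chain2[where g="\<lambda>w. 1 - w", OF r2])
       (auto intro!: derivative_eq_intros)
  then have "((\<lambda>w::complex. sin (of_real pi * w) / of_real pi) has_field_derivative
      (- rGamma z * Digamma z) * rGamma (1 - z) + (- rGamma (1 - z) * Digamma (1 - z) * (- 1)) * rGamma z) (at z)"
    by (simp only: reflection)
  moreover have "((\<lambda>w::complex. sin (of_real pi * w) / of_real pi) has_field_derivative cos (of_real pi * z)) (at z)"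
    by (auto intro!: derivative_eq_intros)
  ultimately have "rGamma z * rGamma (1 - z) * (Digamma (1 - z) - Digamma z) = cos (of_real pi * z)"
    using DERIV_unique by (fastforce simp: algebra_simps)
  also have "rGamma z * rGamma (1 - z) = sin (of_real pi * z) / of_real pi"
    using rGamma_reflection_complex by blast
  finally show ?thesis
    using sin_nz by (simp add: cot_def field_simps)
qed

lemma cot_pi_half_plus_imaginary:
  fixes y :: real
  shows "cot (complex_of_real pi * (complex_of_real (1/2) + \<i> * complex_of_real y))
       = - \<i> * complex_of_real (tanh (pi * y))"
proof -
  define E where "E = exp (pi * y)"
  have pi_z: "complex_of_real pi * (complex_of_real (1/2) + \<i> * complex_of_real y)
      = complex_of_real (pi / 2) + \<i> * complex_of_real (pi * y)"
    by (simp add: algebra_simps)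
  have sin_eq: "sin (complex_of_real (pi / 2) + \<i> * complex_of_real (pi * y)) = complex_of_real ((E + inverse E) / 2)"
    unfolding sin_add cos_of_real sin_of_real E_def cosh_real by simp
  have cos_eq: "cos (complex_of_real (pi / 2) + \<i> * complex_of_real (pi * y)) = - (\<i> * complex_of_real ((E - inverse E) / 2))"
    unfolding cos_add cos_of_real sin_of_real E_def sin_i_times
    by (simp add: exp_of_real flip: of_real_mult)
  have halves: "- (\<i> * complex_of_real (A / 2)) / complex_of_real (B / 2) = - \<i> * complex_of_real (A / B)"
    for A B :: real by (simp add: of_real_divide)
  have "tanh (pi * y) = (E - inverse E) / (E + inverse E)"
    by (simp add: tanh_altdef E_def exp_minus)
  then show ?thesis
    unfolding pi_z cot_def sin_eq cos_eq halves by simp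
qed

text \<open>The reflection formula at \<open>z = 1/2 + i y\<close>, written as a series via the defining
  series of \<open>\<psi>\<close>.\<close>

lemma tanh_partial_fractions:
  fixes y :: real
  shows "(\<lambda>k. 2 * y / ((real k + 1/2)\<^sup>2 + y\<^sup>2)) sums (pi * tanh (pi * y))"
proof -
  define z where "z = complex_of_real (1/2) + \<i> * complex_of_real y"
  have z_not_int: "z \<notin> \<int>"
  proof
    assume "z \<in> \<int>"
    then obtain n :: int where "z = of_int n" by (auto elim: Ints_cases)
    then have "real_of_int (2 * n) = 1" by (simp add: z_def complex_eq_iff)
    then show False by (simp only: of_int_eq_1_iff) presburger
  qed
  have "z \<noteq> 0" "1 - z \<noteq> 0"
    by (simp_all add: z_def complex_eq_iff)
  moreover have "inverse (z + of_nat k) - inverse ((1 - z) + of_nat k)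
      = - \<i> * complex_of_real (2 * y / ((real k + 1/2)\<^sup>2 + y\<^sup>2))" for k
  proof -
    have "(real k + 1/2)\<^sup>2 + y\<^sup>2 > 0" by (simp add: add_pos_nonneg)
    then show ?thesis
      by (simp add: complex_eq_iff z_def inverse_eq_divide Re_divide Im_divide power2_eq_square field_simps)
  qed
  ultimately have "(\<lambda>k. - \<i> * complex_of_real (2 * y / ((real k + 1/2)\<^sup>2 + y\<^sup>2)))
      sums (- \<i> * complex_of_real (pi * tanh (pi * y)))"
    using Digamma_diff_sums[of z "1 - z"] Digamma_reflection_cot[OF z_not_int]
    unfolding z_def cot_pi_half_plus_imaginary by (simp add: mult.left_commute)
  then have "(\<lambda>k. \<i> * (- \<i> * complex_of_real (2 * y / ((real k + 1/2)\<^sup>2 + y\<^sup>2))))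
      sums (\<i> * (- \<i> * complex_of_real (pi * tanh (pi * y))))"
    by (rule sums_mult)
  then have "(\<lambda>k. complex_of_real (2 * y / ((real k + 1/2)\<^sup>2 + y\<^sup>2)))
      sums complex_of_real (pi * tanh (pi * y))"
    by simp
  then show ?thesis by (simp only: sums_of_real_iff)
qed

lemma tanh_odd_partial_fractions:
  fixes m s :: real assumes m: "m > 0"
  shows "(\<lambda>j. s * (m / ((real (2 * j + 1) * m)\<^sup>2 + s\<^sup>2))) sums (pi / 4 * tanh (pi / (2 * m) * s))"
proof -
  have "(\<lambda>k. 1 / 4 * (2 * (s / (2 * m)) / ((real k + 1/2)\<^sup>2 + (s / (2 * m))\<^sup>2)))
      sums (1 / 4 * (pi * tanh (pi * (s / (2 * m)))))"
    by (intro sums_mult tanh_partial_fractions)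
  moreover have "1 / 4 * (2 * (s / (2 * m)) / ((real k + 1/2)\<^sup>2 + (s / (2 * m))\<^sup>2))
      = s * (m / ((real (2 * k + 1) * m)\<^sup>2 + s\<^sup>2))" for k
  proof -
    have "(real (2 * k + 1) * m)\<^sup>2 + s\<^sup>2 = 4 * m\<^sup>2 * ((real k + 1/2)\<^sup>2 + (s / (2 * m))\<^sup>2)"
      using m by (simp add: field_simps power2_eq_square)
    moreover have "(real k + 1/2)\<^sup>2 + (s / (2 * m))\<^sup>2 > 0"
      by (simp add: add_pos_nonneg)
    ultimately show ?thesis
      using m by (simp add: field_simps power2_eq_square)
  qed
  moreover have "1 / 4 * (pi * tanh (pi * (s / (2 * m)))) = pi / 4 * tanh (pi / (2 * m) * s)"
    by simp
  ultimately show ?thesis by simp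
qed

lemma geometric_pair_sums:
  fixes q :: real assumes q: "\<bar>q\<bar> < 1"
  shows "(\<lambda>n. q ^ (2 * n + 1) - q ^ (2 * n + 2)) sums (q / (1 + q))"
proof -
  have q2: "q\<^sup>2 < 1" using q by (simp add: abs_square_less_1)
  then have "norm (q\<^sup>2) < 1" by simp
  then have "(\<lambda>n. (q - q\<^sup>2) * (q\<^sup>2) ^ n) sums ((q - q\<^sup>2) * (1 / (1 - q\<^sup>2)))"
    by (intro sums_mult geometric_sums)
  moreover have "(q - q\<^sup>2) * (q\<^sup>2) ^ n = q ^ (2 * n + 1) - q ^ (2 * n + 2)" for n
  proof -
    have "(q\<^sup>2) ^ n = q ^ (2 * n)" by (simp add: power_mult)
    then show ?thesis by (simp add: power_add algebra_simps power2_eq_square)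
  qed
  moreover have "(q - q\<^sup>2) * (1 / (1 - q\<^sup>2)) = q / (1 + q)"
  proof -
    have "1 - q * q \<noteq> 0" "1 + q \<noteq> 0" using q q2 by (auto simp: power2_eq_square)
    then show ?thesis by (simp add: field_simps power2_eq_square)
  qed
  ultimately show ?thesis by simp
qed

subsection \<open>Transforming the integral\<close>

lemma has_integral_set_lborel:
  fixes f :: "'a::euclidean_space \<Rightarrow> 'b::euclidean_space"
  assumes "set_integrable lborel S f"
  shows "(f has_integral (LINT x:S|lborel. f x)) S"
  using set_borel_integral_eq_integral[OF assms] by (simp add: integrable_integral)

lemma artanh_kernel_integral_sums:
  fixes a m :: real assumes a: "a > 0" and m: "m > 0"
  shows "set_integrable lborel {0<..<1}
           (\<lambda>x. (a\<^sup>2 - (ln x)\<^sup>2) * artanh (x powr m) / (x * (a\<^sup>2 + (ln x)\<^sup>2)\<^sup>2))"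
    and "(\<lambda>j. (1 / real (2 * j + 1)) *
            (LINT x:{0<..<1}|lborel. x powr (real (2 * j + 1) * m - 1) * ((a\<^sup>2 - (ln x)\<^sup>2) / (a\<^sup>2 + (ln x)\<^sup>2)\<^sup>2)))
         sums (LINT x:{0<..<1}|lborel. (a\<^sup>2 - (ln x)\<^sup>2) * artanh (x powr m) / (x * (a\<^sup>2 + (ln x)\<^sup>2)\<^sup>2))"
proof -
  define K where "K x = (a\<^sup>2 - (ln x)\<^sup>2) / (a\<^sup>2 + (ln x)\<^sup>2)\<^sup>2" for x :: real
  define c where "c j = real (2 * j + 1) * m" for j
  define f where "f j x = (1 / real (2 * j + 1)) * (x powr (c j - 1) * K x)" for j x
  have c: "c j > 0" for j using m by (simp add: c_def)
  have f_eq: "f j x = x powr (real (2 * j + 1) * m - 1) / real (2 * j + 1) * K x" for j x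
    by (simp add: f_def c_def)
  have int: "set_integrable lborel {0<..<1} (f j)" for j
    unfolding f_def[abs_def] K_def
    by (intro set_integrable_mult_right set_integrable_powr_laplace_cos_kernel(1)[OF a c])
  have sums: "(\<lambda>j. f j x) sums ((a\<^sup>2 - (ln x)\<^sup>2) * artanh (x powr m) / (x * (a\<^sup>2 + (ln x)\<^sup>2)\<^sup>2))"
    if "x \<in> {0<..<1}" for x
  proof -
    have "artanh (x powr m) / x * K x = (a\<^sup>2 - (ln x)\<^sup>2) * artanh (x powr m) / (x * (a\<^sup>2 + (ln x)\<^sup>2)\<^sup>2)"
      by (simp add: K_def mult_ac)
    then show ?thesis
      using sums_mult2[OF artanh_powr_sums[OF _ _ m], of x "K x"] that
      by (simp only: f_eq greaterThanLessThan_iff)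
  qed
  have abs_summable: "summable (\<lambda>j. \<bar>f j x\<bar>)" if "x \<in> {0<..<1}" for x
    using summable_mult2[OF sums_summable[OF artanh_powr_sums[OF _ _ m]], of x "\<bar>K x\<bar>"] that
    by (simp add: f_eq abs_mult)
  have abs_bound: "(LINT x:{0<..<1}|lborel. \<bar>f j x\<bar>) \<le> 1 / (a\<^sup>2 * m) / (real (2 * j + 1))\<^sup>2" for j
  proof -
    have "(LINT x:{0<..<1}|lborel. \<bar>f j x\<bar>) = (1 / real (2 * j + 1)) * (LINT x:{0<..<1}|lborel. \<bar>x powr (c j - 1) * K x\<bar>)"
      by (simp add: f_def abs_mult)
    also have "\<dots> \<le> (1 / real (2 * j + 1)) * (1 / (a\<^sup>2 * c j))"
      using set_integrable_powr_laplace_cos_kernel(2)[OF a c[of j]] by (intro mult_left_mono) (simp_all add: K_def)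
    finally show ?thesis by (simp add: c_def power2_eq_square mult_ac)
  qed
  note series = sums_set_integral[OF int sums abs_summable abs_bound summable_divide_odd_squares]
  show "set_integrable lborel {0<..<1}
           (\<lambda>x. (a\<^sup>2 - (ln x)\<^sup>2) * artanh (x powr m) / (x * (a\<^sup>2 + (ln x)\<^sup>2)\<^sup>2))"
    by (rule series(1))
  show "(\<lambda>j. (1 / real (2 * j + 1)) *
            (LINT x:{0<..<1}|lborel. x powr (real (2 * j + 1) * m - 1) * ((a\<^sup>2 - (ln x)\<^sup>2) / (a\<^sup>2 + (ln x)\<^sup>2)\<^sup>2)))
         sums (LINT x:{0<..<1}|lborel. (a\<^sup>2 - (ln x)\<^sup>2) * artanh (x powr m) / (x * (a\<^sup>2 + (ln x)\<^sup>2)\<^sup>2))"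
    using series(2) unfolding f_def set_integral_mult_right c_def K_def .
qed

lemma odd_moment_eq_laplace:
  fixes a m :: real assumes a: "a > 0" and m: "m > 0"
  shows "(1 / real (2 * j + 1)) *
           (LINT x:{0<..<1}|lborel. x powr (real (2 * j + 1) * m - 1) * ((a\<^sup>2 - (ln x)\<^sup>2) / (a\<^sup>2 + (ln x)\<^sup>2)\<^sup>2))
       = (LINT s:{0<..}|lborel. s * exp (- a * s) * (m / ((real (2 * j + 1) * m)\<^sup>2 + s\<^sup>2)))"
proof -
  let ?k = "real (2 * j + 1)"
  have "?k * m > 0" using m by simp
  then have "(1 / ?k) * (LINT x:{0<..<1}|lborel. x powr (?k * m - 1) * ((a\<^sup>2 - (ln x)\<^sup>2) / (a\<^sup>2 + (ln x)\<^sup>2)\<^sup>2))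
      = (LINT s:{0<..}|lborel. (1 / ?k) * (s * exp (- a * s) * (?k * m / ((?k * m)\<^sup>2 + s\<^sup>2))))"
    by (simp only: mellin_laplace_cos_kernel[OF a] set_integral_mult_right)
  also have "\<dots> = (LINT s:{0<..}|lborel. s * exp (- a * s) * (m / ((?k * m)\<^sup>2 + s\<^sup>2)))"
    by (rule set_lebesgue_integral_cong) auto
  finally show ?thesis .
qed

lemma laplace_tanh_partial_fractions:
  fixes a m :: real assumes a: "a > 0" and m: "m > 0"
  shows "(\<lambda>j. LINT s:{0<..}|lborel. s * exp (- a * s) * (m / ((real (2 * j + 1) * m)\<^sup>2 + s\<^sup>2)))
     sums (LINT s:{0<..}|lborel. pi / 4 * (exp (- a * s) * tanh (pi / (2 * m) * s)))"
proof -
  define f where "f j s = s * exp (- a * s) * (m / ((real (2 * j + 1) * m)\<^sup>2 + s\<^sup>2))" for j s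
  define B where "B j = 1 / (a\<^sup>2 * m) / (real (2 * j + 1))\<^sup>2" for j
  have bounds: "0 \<le> f j s" "f j s \<le> s * exp (- a * s) * (1 / (m * (real (2 * j + 1))\<^sup>2))"
    if "s > 0" for j s
  proof -
    have "(real (2 * j + 1) * m)\<^sup>2 > 0" using m by simp
    then have "m / ((real (2 * j + 1) * m)\<^sup>2 + s\<^sup>2) \<le> m / (real (2 * j + 1) * m)\<^sup>2"
      using m by (intro divide_left_mono) (auto intro!: add_pos_nonneg mult_pos_pos)
    also have "\<dots> = 1 / (m * (real (2 * j + 1))\<^sup>2)"
      using m by (simp add: power2_eq_square)
    finally show "f j s \<le> s * exp (- a * s) * (1 / (m * (real (2 * j + 1))\<^sup>2))"
      using that unfolding f_def by (intro mult_left_mono) auto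
    show "0 \<le> f j s"
      using that m unfolding f_def by (auto intro!: divide_nonneg_pos add_pos_nonneg)
  qed
  have dominant: "set_integrable lborel {0<..} (\<lambda>s. s * exp (- a * s) * (1 / (m * (real (2 * j + 1))\<^sup>2)))" for j
    using set_integral_mult_exp_neg_Ioi(1)[OF a] by simp
  have int: "set_integrable lborel {0<..} (f j)" for j
  proof (rule set_integrable_bound[OF dominant])
    show "set_borel_measurable lborel {0<..} (f j)"
      by (simp add: set_borel_measurable_def f_def[abs_def])
    show "AE s in lborel. s \<in> {0<..} \<longrightarrow> norm (f j s) \<le> norm (s * exp (- a * s) * (1 / (m * (real (2 * j + 1))\<^sup>2)))"
      using bounds by (intro AE_I2 impI) (metis abs_of_nonneg abs_ge_self order_trans real_norm_def greaterThan_iff)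
  qed
  have sums: "(\<lambda>j. f j s) sums (pi / 4 * (exp (- a * s) * tanh (pi / (2 * m) * s)))" for s
    using sums_mult[OF tanh_odd_partial_fractions[OF m, of s], of "exp (- a * s)"]
    by (simp add: f_def mult_ac)
  have abs_bound: "(LINT s:{0<..}|lborel. \<bar>f j s\<bar>) \<le> B j" for j
  proof -
    have "(LINT s:{0<..}|lborel. \<bar>f j s\<bar>)
        \<le> (LINT s:{0<..}|lborel. s * exp (- a * s) * (1 / (m * (real (2 * j + 1))\<^sup>2)))"
      using bounds by (intro set_integral_mono set_integrable_abs int dominant) auto
    then show ?thesis
      using set_integral_mult_exp_neg_Ioi(2)[OF a] by (simp add: B_def)
  qed
  have "summable B"
    unfolding B_def by (rule summable_divide_odd_squares)
  have abs_summable: "summable (\<lambda>j. \<bar>f j s\<bar>)" if "s \<in> {0<..}" for s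
    using sums_summable[OF sums[of s]] bounds(1) that by simp
  from sums_set_integral(2)[OF int sums abs_summable abs_bound \<open>summable B\<close>]
  show ?thesis by (simp only: f_def)
qed

lemma set_integral_exp_neg_div_one_plus_exp_neg:
  fixes a d :: real assumes a: "a > 0" and d: "d > 0"
  shows "set_integrable lborel {0<..} (\<lambda>s. exp (- a * s) * (exp (- d * s) / (1 + exp (- d * s))))"
    and "(LINT s:{0<..}|lborel. exp (- a * s) * (exp (- d * s) / (1 + exp (- d * s))))
         = (Digamma (a / (2 * d) + 1) - Digamma (a / (2 * d) + 1/2)) / (2 * d)"
proof -
  define b1 where "b1 n = a + real (2 * n + 1) * d" for n
  define b2 where "b2 n = a + real (2 * n + 2) * d" for n
  have b: "b1 n > 0" "b2 n > 0" "b1 n \<le> b2 n" for n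
    using a d by (simp_all add: b1_def b2_def add_pos_nonneg)
  define f where "f n s = exp (- b1 n * s) - exp (- b2 n * s)" for n s
  have int: "set_integrable lborel {0<..} (f n)" for n
    unfolding f_def[abs_def] by (intro set_integral_diff(1) set_integral_exp_neg_Ioi(1) b)
  have integral: "(LINT s:{0<..}|lborel. f n s) = 1 / b1 n - 1 / b2 n" for n
    using set_integral_diff(2)[OF set_integral_exp_neg_Ioi(1)[OF b(1)] set_integral_exp_neg_Ioi(1)[OF b(2)]]
      set_integral_exp_neg_Ioi(2)[OF b(1)[of n]] set_integral_exp_neg_Ioi(2)[OF b(2)[of n]]
    by (simp add: f_def)
  have nonneg: "f n s \<ge> 0" if "s > 0" for n s
    using that b[of n] by (simp add: f_def mult_right_mono)
  have digamma: "(\<lambda>n. 1 / b1 n - 1 / b2 n)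
      sums ((Digamma (a / (2 * d) + 1) - Digamma (a / (2 * d) + 1/2)) / (2 * d))"
    unfolding b1_def b2_def using a d by (intro Digamma_odd_even_sums) simp_all
  have sums: "(\<lambda>n. f n s) sums (exp (- a * s) * (exp (- d * s) / (1 + exp (- d * s))))" if "s \<in> {0<..}" for s
  proof -
    have "exp (- (a + real k * d) * s) = exp (- a * s) * exp (- d * s) ^ k" for k
      by (simp add: exp_of_nat_mult[symmetric] exp_add[symmetric] algebra_simps)
    then have "f n s = exp (- a * s) * (exp (- d * s) ^ (2 * n + 1) - exp (- d * s) ^ (2 * n + 2))" for n
      unfolding f_def b1_def b2_def by (simp only: right_diff_distrib)
    moreover have "\<bar>exp (- d * s)\<bar> < 1" using that d by simp
    ultimately show ?thesis by (simp only: sums_mult geometric_pair_sums)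
  qed
  have abs_summable: "summable (\<lambda>n. \<bar>f n s\<bar>)" if "s \<in> {0<..}" for s
    using sums_summable[OF sums[OF that]] nonneg that by simp
  have abs_integral: "(LINT s:{0<..}|lborel. \<bar>f n s\<bar>) \<le> 1 / b1 n - 1 / b2 n" for n
    using nonneg integral[of n] by (simp add: set_lebesgue_integral_cong[of _ _ "\<lambda>s. \<bar>f n s\<bar>" "f n"])
  note series = sums_set_integral[OF int sums abs_summable abs_integral sums_summable[OF digamma]]
  show "set_integrable lborel {0<..} (\<lambda>s. exp (- a * s) * (exp (- d * s) / (1 + exp (- d * s))))"
    by (rule series(1))
  from series(2) have "(\<lambda>n. 1 / b1 n - 1 / b2 n)
      sums (LINT s:{0<..}|lborel. exp (- a * s) * (exp (- d * s) / (1 + exp (- d * s))))"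
    by (simp add: integral)
  then show "(LINT s:{0<..}|lborel. exp (- a * s) * (exp (- d * s) / (1 + exp (- d * s))))
         = (Digamma (a / (2 * d) + 1) - Digamma (a / (2 * d) + 1/2)) / (2 * d)"
    using digamma sums_unique2 by blast
qed

lemma set_integral_exp_neg_tanh:
  fixes a c :: real assumes a: "a > 0" and c: "c > 0"
  shows "(LINT s:{0<..}|lborel. exp (- a * s) * tanh (c * s))
       = 1 / a - (Digamma (a / (4 * c) + 1) - Digamma (a / (4 * c) + 1/2)) / (2 * c)"
proof -
  let ?G = "\<lambda>s. exp (- a * s) * (exp (- (2 * c) * s) / (1 + exp (- (2 * c) * s)))"
  have "2 * (2 * c) = 4 * c" by simp
  note G = set_integral_exp_neg_div_one_plus_exp_neg[OF a, of "2 * c", unfolded this]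
  have tanh_eq: "tanh (c * s) = 1 - 2 * (exp (- (2 * c) * s) / (1 + exp (- (2 * c) * s)))" for s
  proof -
    have "1 + exp (- (2 * c) * s) > 0" by (simp add: add_pos_pos)
    then show ?thesis by (simp add: tanh_real_altdef field_simps mult_ac)
  qed
  have "exp (- a * s) * tanh (c * s) = exp (- a * s) - 2 * ?G s" for s
    unfolding tanh_eq by (simp add: algebra_simps)
  then have "(LINT s:{0<..}|lborel. exp (- a * s) * tanh (c * s))
      = (LINT s:{0<..}|lborel. exp (- a * s) - 2 * ?G s)"
    by simp
  also have "\<dots> = (LINT s:{0<..}|lborel. exp (- a * s)) - (LINT s:{0<..}|lborel. 2 * ?G s)"
    using set_integral_exp_neg_Ioi(1)[OF a] G(1) c by (intro set_integral_diff(2) set_integrable_mult_right) simp_all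
  also have "\<dots> = (LINT s:{0<..}|lborel. exp (- a * s)) - 2 * (LINT s:{0<..}|lborel. ?G s)"
    by (simp only: set_integral_mult_right)
  also have "\<dots> = 1 / a - 2 * ((Digamma (a / (4 * c) + 1) - Digamma (a / (4 * c) + 1/2)) / (4 * c))"
    using set_integral_exp_neg_Ioi(2)[OF a] G(2) c by simp
  moreover have "2 * (D / (4 * c)) = D / (2 * c)" for D :: real
    by simp
  ultimately show ?thesis by (simp only:)
qed

theorem mainTheorem9:
  fixes a m :: real
  assumes "a > 0" and "m > 0"
  shows "((\<lambda>x::real. (a\<^sup>2 - (ln x)\<^sup>2) * artanh (x powr m) / (x * (a\<^sup>2 + (ln x)\<^sup>2)\<^sup>2))
          has_integral
          (1/4) * (- m * Digamma (a * m / (2 * pi) + 1) + m * Digamma ((a * m + pi) / (2 * pi)) + pi / a))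
         {0<..<1}"
proof -
  let ?F = "\<lambda>x::real. (a\<^sup>2 - (ln x)\<^sup>2) * artanh (x powr m) / (x * (a\<^sup>2 + (ln x)\<^sup>2)\<^sup>2)"
  let ?I = "LINT x:{0<..<1}|lborel. ?F x"
  have "(\<lambda>j. LINT s:{0<..}|lborel. s * exp (- a * s) * (m / ((real (2 * j + 1) * m)\<^sup>2 + s\<^sup>2))) sums ?I"
    using artanh_kernel_integral_sums(2)[OF assms] unfolding odd_moment_eq_laplace[OF assms] .
  then have "?I = (LINT s:{0<..}|lborel. pi / 4 * (exp (- a * s) * tanh (pi / (2 * m) * s)))"
    using laplace_tanh_partial_fractions[OF assms] sums_unique2 by blast
  also have "\<dots> = pi / 4 * (1 / a - (Digamma (a * m / (2 * pi) + 1) - Digamma (a * m / (2 * pi) + 1/2)) / (pi / m))"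
  proof -
    have "pi / (2 * m) > 0" "a / (4 * (pi / (2 * m))) = a * m / (2 * pi)" "2 * (pi / (2 * m)) = pi / m"
      using assms by simp_all
    then show ?thesis
      using set_integral_exp_neg_tanh[OF assms(1), of "pi / (2 * m)"] by simp
  qed
  also have "\<dots> = (1/4) * (- m * Digamma (a * m / (2 * pi) + 1) + m * Digamma ((a * m + pi) / (2 * pi)) + pi / a)"
  proof -
    have "pi / 4 * (1 / a - (X - Y) / (pi / m)) = (1/4) * (- m * X + m * Y + pi / a)" for X Y :: real
      using assms by (simp add: field_simps)
    moreover have "a * m / (2 * pi) + 1/2 = (a * m + pi) / (2 * pi)"
      by (simp add: field_simps)
    ultimately show ?thesis by (simp only:)
  qed
  finally have integral_value: "?I = (1/4) * (- m * Digamma (a * m / (2 * pi) + 1) + m * Digamma ((a * m + pi) / (2 * pi)) + pi / a)" .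
  with has_integral_set_lborel[OF artanh_kernel_integral_sums(1)[OF assms]] show ?thesis
    by simp
qed

end
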